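(* Let $X$ be an uncountable regular topological space which is open Whyburn and $\mathcal{K}$-Lindel\"{o}f. Then $X$ is a Lusin space.
   Context: A space $X$ is open Whyburn if for every open set $A\subseteq X$ and every point $x\in\overline{A}\setminus A$ there is an open set $B\subseteq A$ with $\overline{B}\setminus A=\{x\}$. $\mathcal{K}$ denotes the collection of all families $\mathcal{U}$ of open subsets of $X$ such that $X=\bigcup\{\overline{U}:U\in\mathcal{U}\}$. $X$ is $\mathcal{K}$-Lindel\"{o}f if every $\mathcal{U}\in\mathcal{K}$ has a countable subfamily belonging to $\mathcal{K}$. A Hausdorff space $X$ is a Lusin space (in the sense of Kunen) if (a) every nowhere dense subset of $X$ is countable, (b) $X$ has at most countably many isolated points, and (c) $X$ is uncountable. *)

theory Defs
  imports "HOL-Analysis.Analysis"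
begin

definition open_Whyburn :: "'a topology \<Rightarrow> bool" where
  "open_Whyburn X \<longleftrightarrow>
     (\<forall>A x. openin X A \<and> x \<in> X closure_of A - A \<longrightarrow>
        (\<exists>B. openin X B \<and> B \<subseteq> A \<and> X closure_of B - A = {x}))"

definition K_family :: "'a topology \<Rightarrow> 'a set set \<Rightarrow> bool" where
  "K_family X \<U> \<longleftrightarrow> (\<forall>U\<in>\<U>. openin X U) \<and> topspace X = (\<Union>U\<in>\<U>. X closure_of U)"

definition K_Lindelof :: "'a topology \<Rightarrow> bool" where
  "K_Lindelof X \<longleftrightarrow>
     (\<forall>\<U>. K_family X \<U> \<longrightarrow> (\<exists>\<V>\<subseteq>\<U>. countable \<V> \<and> K_family X \<V>))"

definition nowhere_dense_in :: "'a topology \<Rightarrow> 'a set \<Rightarrow> bool" where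
  "nowhere_dense_in X S \<longleftrightarrow> S \<subseteq> topspace X \<and> X interior_of (X closure_of S) = {}"

definition Lusin_space :: "'a topology \<Rightarrow> bool" where
  "Lusin_space X \<longleftrightarrow> Hausdorff_space X
     \<and> (\<forall>S. nowhere_dense_in X S \<longrightarrow> countable S)
     \<and> countable {x \<in> topspace X. openin X {x}}
     \<and> uncountable (topspace X)"

end

theory Submission
  imports Defs
begin

(* Let C be a closed nowhere dense set, so A = X - C is open and dense. Open Whyburn gives for
   every x in C an open B x \<subseteq> A whose closure meets C only in x; together with the open sets
   whose closure lies in A (which cover A by regularity) they form a family in \<K>.  A countable
   subfamily in \<K> has countably many closures, each meeting C in at most one point, so C is
   countable; every nowhere dense set lies in such a C.
   If the open set I of isolated points were uncountable, its boundary N = cl I - I, being closed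
   nowhere dense, would be countable.  Cut I into uncountably many disjoint uncountable pieces;
   a point of N can fail to be in cl (I - R) for at most one piece R, so some piece R satisfies
   N \<subseteq> cl (I - R).  Then the singletons of I together with I - R and X - cl I form a family
   in \<K> in which only the (closed) singletons reach R, so R would be countable. *)

lemma regular_space_closure_of_subset:
  assumes "regular_space X" "openin X W" "x \<in> W"
  obtains U where "openin X U" "x \<in> U" "X closure_of U \<subseteq> W"
proof -
  obtain U V where "openin X U" "closedin X V" "x \<in> U" "U \<subseteq> V" "V \<subseteq> W"
    using assms unfolding neighbourhood_base_of_closedin[symmetric] neighbourhood_base_of by metis
  then show thesis
    using that closure_of_minimal by (metis order_trans)
qed

lemma K_Lindelof_countable_by_traces:
  assumes "K_Lindelof X" "K_family X \<U>" "S \<subseteq> topspace X"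
    and "\<And>U. U \<in> \<U> \<Longrightarrow> countable (X closure_of U \<inter> S)"
  shows "countable S"
proof -
  obtain \<V> where \<V>: "\<V> \<subseteq> \<U>" "countable \<V>" "K_family X \<V>"
    using assms(1,2) unfolding K_Lindelof_def by blast
  then have "S \<subseteq> (\<Union>V\<in>\<V>. X closure_of V \<inter> S)"
    using assms(3) unfolding K_family_def by blast
  moreover have "countable (\<Union>V\<in>\<V>. X closure_of V \<inter> S)"
    using \<V> assms(4) by (intro countable_UN) auto
  ultimately show ?thesis
    by (rule countable_subset)
qed

lemma countable_closedin_nowhere_dense:
  assumes reg: "regular_space X" and Whyburn: "open_Whyburn X" and K: "K_Lindelof X"
    and C: "closedin X C" "X interior_of C = {}"
  shows "countable C"
proof -
  define A where "A = topspace X - C"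
  have A_open: "openin X A"
    unfolding A_def using C by blast
  have A_dense: "X closure_of A = topspace X"
    unfolding A_def closure_of_complement using C by simp
  have C_eq: "C = topspace X - A"
    unfolding A_def using C closedin_subset by blast
  have "\<exists>B. openin X B \<and> B \<subseteq> A \<and> X closure_of B - A = {x}" if "x \<in> C" for x
    using Whyburn A_open A_dense that unfolding open_Whyburn_def C_eq by blast
  then obtain B where B: "\<And>x. x \<in> C \<Longrightarrow> openin X (B x) \<and> B x \<subseteq> A \<and> X closure_of (B x) - A = {x}"
    by metis
  define \<U> where "\<U> = B ` C \<union> {V. openin X V \<and> X closure_of V \<subseteq> A}"
  have "K_family X \<U>"
    unfolding K_family_def
  proof (intro conjI ballI equalityI subsetI)
    show "openin X U" if "U \<in> \<U>" for U
      using that B unfolding \<U>_def by blast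
    show "y \<in> (\<Union>U\<in>\<U>. X closure_of U)" if "y \<in> topspace X" for y
    proof (cases "y \<in> C")
      case True
      then have "y \<in> X closure_of (B y)" "B y \<in> \<U>"
        using B[OF True] unfolding \<U>_def by blast+
      then show ?thesis
        by (rule UN_I[rotated])
    next
      case False
      with that have "y \<in> A"
        unfolding A_def by blast
      then obtain V where V: "openin X V" "y \<in> V" "X closure_of V \<subseteq> A"
        by (rule regular_space_closure_of_subset[OF reg A_open])
      have "y \<in> X closure_of V"
        using closure_of_subset[OF openin_subset[OF V(1)]] V(2) by blast
      with V show ?thesis
        unfolding \<U>_def by blast
    qed
  qed (meson UN_E closure_of_subset_topspace subsetD)
  moreover have "countable (X closure_of U \<inter> C)" if "U \<in> \<U>" for U
  proof -
    have trace: "X closure_of U \<inter> C = X closure_of U - A"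
      unfolding C_eq using closure_of_subset_topspace[of X U] by blast
    from that consider x where "x \<in> C" "U = B x" | "X closure_of U \<subseteq> A"
      unfolding \<U>_def by blast
    then show ?thesis
    proof cases
      case 1
      then show ?thesis
        using B trace by simp
    next
      case 2
      then show ?thesis
        using trace by (simp add: Diff_eq_empty_iff[THEN iffD2])
    qed
  qed
  ultimately show ?thesis
    using K_Lindelof_countable_by_traces[OF K] C closedin_subset by blast
qed

lemma countable_nowhere_dense:
  assumes "regular_space X" "open_Whyburn X" "K_Lindelof X" "nowhere_dense_in X S"
  shows "countable S"
proof -
  have "countable (X closure_of S)"
    using countable_closedin_nowhere_dense[OF assms(1-3)] assms(4)
    unfolding nowhere_dense_in_def by simp
  then show ?thesis
    using assms(4) closure_of_subset countable_subset unfolding nowhere_dense_in_def by metis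
qed

lemma uncountable_disjoint_family_uncountable:
  assumes "uncountable I"
  obtains P where "disjoint_family_on P I" "\<And>a. a \<in> I \<Longrightarrow> P a \<subseteq> I"
    "\<And>a. a \<in> I \<Longrightarrow> uncountable (P a)"
proof -
  obtain f where f: "bij_betw f (I \<times> I) I"
    using assms card_of_Times_same_infinite card_of_ordIso countable_finite by metis
  then have inj: "inj_on f (I \<times> I)"
    by (rule bij_betw_imp_inj_on)
  show thesis
  proof (rule that[of "\<lambda>a. f ` ({a} \<times> I)"])
    show "disjoint_family_on (\<lambda>a. f ` ({a} \<times> I)) I"
      unfolding disjoint_family_on_def using inj by (auto dest: inj_onD)
    show "f ` ({a} \<times> I) \<subseteq> I" if "a \<in> I" for a
      using f that bij_betw_apply by fastforce
    show "uncountable (f ` ({a} \<times> I))" if "a \<in> I" for a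
    proof
      assume "countable (f ` ({a} \<times> I))"
      then have "countable ({a} \<times> I)"
        by (rule countable_image_inj_on) (use inj that in \<open>auto intro: inj_on_subset\<close>)
      then have "countable (snd ` ({a} \<times> I))"
        by (rule countable_image)
      with assms show False
        by simp
    qed
  qed
qed

lemma uncountable_subset_closure_of_Diff:
  assumes "uncountable I" "countable N" "N \<subseteq> X closure_of I"
  obtains R where "R \<subseteq> I" "uncountable R" "N \<subseteq> X closure_of (I - R)"
proof -
  obtain P where P: "disjoint_family_on P I" "\<And>a. a \<in> I \<Longrightarrow> P a \<subseteq> I"
    "\<And>a. a \<in> I \<Longrightarrow> uncountable (P a)"
    using uncountable_disjoint_family_uncountable[OF assms(1)] by blast
  define bad where "bad p a \<longleftrightarrow> p \<in> N \<and> p \<notin> X closure_of (I - P a)" for p a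
  have bad_unique: "a = b" if "a \<in> I" "b \<in> I" "bad p a" "bad p b" for p a b
  proof (rule ccontr)
    assume "a \<noteq> b"
    with P(1) that(1,2) have "P a \<inter> P b = {}"
      by (simp add: disjoint_family_onD)
    then have "I = (I - P a) \<union> (I - P b)"
      by blast
    then have "X closure_of I = X closure_of (I - P a) \<union> X closure_of (I - P b)"
      by (metis closure_of_Un)
    moreover have "p \<in> X closure_of I"
      using that(3) assms(3) unfolding bad_def by blast
    ultimately show False
      using that(3,4) unfolding bad_def by blast
  qed
  define Bad where "Bad = {a \<in> I. \<exists>p. bad p a}"
  define witness where "witness a = (SOME p. bad p a)" for a
  have witness: "bad (witness a) a" if "a \<in> Bad" for a
    using that someI_ex[of "\<lambda>p. bad p a"] unfolding Bad_def witness_def by blast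
  have "countable Bad"
  proof (rule countable_image_inj_on)
    have "witness ` Bad \<subseteq> N"
      using witness unfolding bad_def by blast
    then show "countable (witness ` Bad)"
      using assms(2) by (rule countable_subset)
    show "inj_on witness Bad"
      using witness bad_unique unfolding Bad_def by (metis (mono_tags, lifting) inj_onI mem_Collect_eq)
  qed
  with assms(1) have "\<not> I \<subseteq> Bad"
    using countable_subset by blast
  then obtain a where "a \<in> I" "a \<notin> Bad"
    by blast
  then show thesis
    by (intro that[of "P a"] P) (auto simp: Bad_def bad_def)
qed

definition isolated_points_of :: "'a topology \<Rightarrow> 'a set" where
  "isolated_points_of X = {x \<in> topspace X. openin X {x}}"

lemma openin_subset_isolated_points_of:
  assumes "S \<subseteq> isolated_points_of X"
  shows "openin X S"
  using assms unfolding isolated_points_of_def by (subst openin_subopen) blast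

lemma K_Lindelof_countable_isolated_points_subset:
  assumes "t1_space X" "K_Lindelof X"
    and I: "I \<subseteq> isolated_points_of X"
    and R: "R \<subseteq> I" "X closure_of I - I \<subseteq> X closure_of (I - R)"
  shows "countable R"
proof -
  have I_top: "I \<subseteq> topspace X"
    using I unfolding isolated_points_of_def by blast
  have R_open: "openin X R"
    using R(1) I openin_subset_isolated_points_of by blast
  define \<U> where "\<U> = (\<lambda>x. {x}) ` I \<union> {I - R, topspace X - X closure_of I}"
  have "K_family X \<U>"
    unfolding K_family_def
  proof (intro conjI ballI equalityI subsetI)
    show "openin X U" if "U \<in> \<U>" for U
      using that I unfolding \<U>_def by (auto intro: openin_subset_isolated_points_of)
    show "y \<in> (\<Union>U\<in>\<U>. X closure_of U)" if y: "y \<in> topspace X" for y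
    proof -
      consider "y \<in> I" | "y \<in> X closure_of I - I" | "y \<in> topspace X - X closure_of I"
        using y by blast
      then show ?thesis
      proof cases
        case 1
        then have "y \<in> X closure_of {y}" "{y} \<in> \<U>"
          using y closure_of_subset[of "{y}" X] unfolding \<U>_def by auto
        then show ?thesis
          by (rule UN_I[rotated])
      next
        case 2
        then have "y \<in> X closure_of (I - R)" "I - R \<in> \<U>"
          using R(2) unfolding \<U>_def by auto
        then show ?thesis
          by (rule UN_I[rotated])
      next
        case 3
        then have "y \<in> X closure_of (topspace X - X closure_of I)" "topspace X - X closure_of I \<in> \<U>"
          using closure_of_subset[of "topspace X - X closure_of I" X] unfolding \<U>_def by auto
        then show ?thesis
          by (rule UN_I[rotated])
      qed
    qed
  qed (meson UN_E closure_of_subset_topspace subsetD)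
  moreover have "countable (X closure_of U \<inter> R)" if "U \<in> \<U>" for U
  proof -
    from that consider x where "x \<in> I" "U = {x}" | "U \<inter> R = {}"
      unfolding \<U>_def using R(1) closure_of_subset[OF I_top] by blast
    then show ?thesis
    proof cases
      case 1
      then show ?thesis
        using assms(1) I_top by (simp add: closure_of_singleton countable_Int1)
    next
      case 2
      then have "X closure_of U \<inter> R = {}"
        using openin_Int_closure_of_eq_empty[OF R_open] by blast
      then show ?thesis
        by simp
    qed
  qed
  ultimately show ?thesis
    using K_Lindelof_countable_by_traces[OF assms(2)] R(1) I_top by blast
qed

lemma countable_isolated_points_of:
  assumes reg: "regular_space X" and "t1_space X" "open_Whyburn X" and K: "K_Lindelof X"
  shows "countable (isolated_points_of X)"
proof (rule ccontr)
  define I where "I = isolated_points_of X"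
  assume "uncountable (isolated_points_of X)"
  then have uncountable_I: "uncountable I"
    unfolding I_def .
  have I_open: "openin X I"
    unfolding I_def by (rule openin_subset_isolated_points_of) simp
  define N where "N = X closure_of I - I"
  have "closedin X N"
    unfolding N_def using I_open by (simp add: closedin_diff)
  moreover have "X interior_of N = {}"
  proof -
    have "X interior_of N \<inter> I = {}"
      using interior_of_subset[of X N] unfolding N_def by blast
    then have "X interior_of N \<inter> X closure_of I = {}"
      by (simp add: openin_Int_closure_of_eq_empty)
    then show ?thesis
      using interior_of_subset[of X N] unfolding N_def by blast
  qed
  ultimately have "countable N"
    using countable_closedin_nowhere_dense[OF reg assms(3) K] by blast
  then obtain R where R: "R \<subseteq> I" "uncountable R" "N \<subseteq> X closure_of (I - R)"
    using uncountable_subset_closure_of_Diff[OF uncountable_I] unfolding N_def by blast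
  have "countable R"
    using K_Lindelof_countable_isolated_points_subset[OF assms(2) K _ R(1)] I_def R(3)
    unfolding N_def by blast
  with R(2) show False
    by contradiction
qed

theorem lemma3p1:
  fixes X :: "'a topology"
  assumes "uncountable (topspace X)"
    and "regular_space X" and "t1_space X"
    and "open_Whyburn X" and "K_Lindelof X"
  shows "Lusin_space X"
  unfolding Lusin_space_def isolated_points_of_def[symmetric]
  using assms regular_t1_imp_Hausdorff_space[of X] countable_nowhere_dense[of X]
    countable_isolated_points_of[of X]
  by simp

end
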